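(* Let $k\neq 0$, $a$, $b$ be real numbers and let $\{S^{(a,b)}_{k,n}\}_{n\ge 0}$ be the generalized $k$-FL sequence. (a) For an odd integer $n\ge 1$, the matrix $A^{(k,a,b)}_n$ is invertible if and only if $S^{(a,b)}_{k,n+1}-S^{(a,b)}_{k,n}\neq -bk+2b-a$. (b) For an even integer $n\ge 2$, the matrix $B^{(k,a,b)}_n$ is invertible if and only if $S^{(a,b)}_{k,n+1}-S^{(a,b)}_{k,n}\neq bk-2b+a$ and $S^{(a,b)}_{k,n+1}+S^{(a,b)}_{k,n}\neq bk+2b+a$.
   Context: For real numbers $k,a,b$, the generalized $k$-FL sequence $\{S^{(a,b)}_{k,n}\}_{n\ge0}$ is defined by $S^{(a,b)}_{k,0}=2b$, $S^{(a,b)}_{k,1}=bk+a$, and $S^{(a,b)}_{k,n}=k\,S^{(a,b)}_{k,n-1}+S^{(a,b)}_{k,n-2}$ for $n\ge2$. For $n\ge1$, $A^{(k,a,b)}_n$ is the $n\times n$ real skew circulant matrix with first row $(S^{(a,b)}_{k,1},\dots,S^{(a,b)}_{k,n})$, i.e. its $(i,j)$ entry is $S^{(a,b)}_{k,j-i+1}$ if $j\ge i$ and $-S^{(a,b)}_{k,n+j-i+1}$ if $j<i$. $B^{(k,a,b)}_n$ is the $n\times n$ circulant matrix whose $(i,j)$ entry is $S^{(a,b)}_{k,j-i+1}$ if $j\ge i$ and $S^{(a,b)}_{k,n+j-i+1}$ if $j<i$. *)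

theory Defs
  imports "Jordan_Normal_Form.Matrix"
begin

fun FL :: "real \<Rightarrow> real \<Rightarrow> real \<Rightarrow> nat \<Rightarrow> real" where
  "FL k a b 0 = 2 * b"
| "FL k a b (Suc 0) = b * k + a"
| "FL k a b (Suc (Suc n)) = k * FL k a b (Suc n) + FL k a b n"

definition skewcircA :: "real \<Rightarrow> real \<Rightarrow> real \<Rightarrow> nat \<Rightarrow> real mat" where
  "skewcircA k a b n = mat n n (\<lambda>(i, j).
     if i \<le> j then FL k a b (j - i + 1) else - FL k a b (n + j - i + 1))"

definition circB :: "real \<Rightarrow> real \<Rightarrow> real \<Rightarrow> nat \<Rightarrow> real mat" where
  "circB k a b n = mat n n (\<lambda>(i, j).
     if i \<le> j then FL k a b (j - i + 1) else FL k a b (n + j - i + 1))"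

end

theory Submission
  imports Defs "Jordan_Normal_Form.Determinant"
begin

text \<open>Let P be the cyclic shift twisted by e (e = -1 for A_n, e = 1 for B_n), so P^n = e.
  Both matrices are G = \<Sum>_j S_(j+1) P^j, and the recurrence of the sequence collapses
  G (P^2 + k P - 1) to c0 + c1 P with c0 = e S_(n+1) - S_1 and c1 = e S_n - 2b.
  Factor P^2 + k P - 1 = (P - r1)(P - r2) with r1 r2 = -1. The matrix P - r is singular exactly
  when r^n = e, which for |e| = 1 forces r = 1 or r = -1; neither is a root of x^2 + k x - 1
  when k \<noteq> 0. Hence G is singular iff c0 + c1 P is, i.e. iff c0 = c1 = 0 or (-c0/c1)^n = e,
  and the parity of n turns this into the stated conditions.\<close>

lemma invertible_mat_iff_det_nonzero:
  fixes A :: "'a :: field mat"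
  assumes A: "A \<in> carrier_mat n n"
  shows "invertible_mat A \<longleftrightarrow> det A \<noteq> 0"
proof -
  have units: "A \<in> Units (ring_mat TYPE('a) n ()) \<longleftrightarrow>
      (\<exists>B \<in> carrier_mat n n. B * A = 1\<^sub>m n \<and> A * B = 1\<^sub>m n)"
    using A by (simp add: Units_def ring_mat_def)
  have "invertible_mat A \<longleftrightarrow> (\<exists>B \<in> carrier_mat n n. B * A = 1\<^sub>m n \<and> A * B = 1\<^sub>m n)"
  proof
    assume "invertible_mat A"
    then obtain B where AB: "A * B = 1\<^sub>m n" and BA: "B * A = 1\<^sub>m (dim_row B)"
      using A unfolding invertible_mat_def inverts_mat_def by auto
    have "B \<in> carrier_mat n n"
      using arg_cong[OF AB, of dim_col] arg_cong[OF BA, of dim_col] A by auto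
    with AB BA show "\<exists>B \<in> carrier_mat n n. B * A = 1\<^sub>m n \<and> A * B = 1\<^sub>m n" by auto
  next
    assume "\<exists>B \<in> carrier_mat n n. B * A = 1\<^sub>m n \<and> A * B = 1\<^sub>m n"
    with A show "invertible_mat A"
      unfolding invertible_mat_def inverts_mat_def by auto
  qed
  also have "\<dots> \<longleftrightarrow> det A \<noteq> 0"
    using unit_imp_det_non_zero[of A n "()"] det_non_zero_imp_unit[OF A, of "()"] units by blast
  finally show ?thesis .
qed

lemma abs_power_eq_1_imp:
  fixes x :: real
  assumes "0 < n" "\<bar>x ^ n\<bar> = 1"
  shows "x = 1 \<or> x = - 1"
proof -
  have "\<bar>x\<bar> ^ n = 1 ^ n" using assms(2) by (simp add: power_abs)
  then have "\<bar>x\<bar> = 1" using power_eq_iff_eq_base[OF assms(1) abs_ge_zero zero_le_one] by blast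
  then show ?thesis by auto
qed

lemma odd_power_eq_minus_one_iff:
  fixes x :: real
  assumes "odd n"
  shows "x ^ n = - 1 \<longleftrightarrow> x = - 1"
  using assms abs_power_eq_1_imp[of n x] by (auto simp: odd_pos)

lemma even_power_eq_one_iff:
  fixes x :: real
  assumes "even n" "0 < n"
  shows "x ^ n = 1 \<longleftrightarrow> x = 1 \<or> x = - 1"
  using assms abs_power_eq_1_imp[of n x] by auto

lemma singular_combination_odd_iff:
  fixes c0 c1 :: real
  assumes "odd n"
  shows "(c0 = 0 \<and> c1 = 0) \<or> (c1 \<noteq> 0 \<and> (- c0 / c1) ^ n = - 1) \<longleftrightarrow> c0 = c1"
  unfolding odd_power_eq_minus_one_iff[OF assms] by (auto simp: field_simps)

lemma singular_combination_even_iff: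
  fixes c0 c1 :: real
  assumes "even n" "0 < n"
  shows "(c0 = 0 \<and> c1 = 0) \<or> (c1 \<noteq> 0 \<and> (- c0 / c1) ^ n = 1) \<longleftrightarrow> c0 = c1 \<or> c0 = - c1"
  unfolding even_power_eq_one_iff[OF assms] by (auto simp: field_simps)

definition twisted_circulant :: "'a::comm_ring_1 \<Rightarrow> nat \<Rightarrow> (nat \<Rightarrow> 'a) \<Rightarrow> 'a mat" where
  "twisted_circulant e n s = mat n n (\<lambda>(i, j). if i \<le> j then s (j - i) else e * s (n + j - i))"

definition twisted_rotate :: "'a::comm_ring_1 \<Rightarrow> nat \<Rightarrow> (nat \<Rightarrow> 'a) \<Rightarrow> nat \<Rightarrow> 'a" where
  "twisted_rotate e n s m = (if m = 0 then e * s (n - 1) else s (m - 1))"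

definition twisted_shift :: "'a::comm_ring_1 \<Rightarrow> nat \<Rightarrow> 'a mat" where
  "twisted_shift e n = mat n n (\<lambda>(i, j). if j = Suc i then 1 else if i = n - 1 \<and> j = 0 then e else 0)"

lemma twisted_circulant_carrier [simp]: "twisted_circulant e n s \<in> carrier_mat n n"
  by (simp add: twisted_circulant_def)

lemma twisted_shift_carrier [simp]: "twisted_shift e n \<in> carrier_mat n n"
  by (simp add: twisted_shift_def)

lemma dim_twisted_circulant [simp]:
  "dim_row (twisted_circulant e n s) = n" "dim_col (twisted_circulant e n s) = n"
  by (simp_all add: twisted_circulant_def)

lemma dim_twisted_shift [simp]: "dim_row (twisted_shift e n) = n" "dim_col (twisted_shift e n) = n"
  by (simp_all add: twisted_shift_def)

lemma twisted_shift_index: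
  "i < n \<Longrightarrow> j < n \<Longrightarrow> twisted_shift e n $$ (i, j) =
    (if 0 < j then (if i = j - 1 then 1 else 0) else if i = n - 1 then e else 0)"
  by (auto simp: twisted_shift_def)

lemma twisted_circulant_cong:
  "(\<And>m. m < n \<Longrightarrow> s m = t m) \<Longrightarrow> twisted_circulant e n s = twisted_circulant e n t"
  by (intro eq_matI) (auto simp: twisted_circulant_def)

lemma twisted_circulant_delta: "twisted_circulant e n (\<lambda>m. if m = 0 then 1 else 0) = 1\<^sub>m n"
  by (intro eq_matI) (auto simp: twisted_circulant_def)

lemma twisted_circulant_smult: "twisted_circulant e n (\<lambda>m. c * s m) = c \<cdot>\<^sub>m twisted_circulant e n s"
  by (intro eq_matI) (auto simp: twisted_circulant_def)

lemma twisted_circulant_add: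
  "twisted_circulant e n (\<lambda>m. s m + t m) = twisted_circulant e n s + twisted_circulant e n t"
  by (intro eq_matI) (auto simp: twisted_circulant_def algebra_simps)

lemma twisted_circulant_diff:
  "twisted_circulant e n (\<lambda>m. s m - t m) = twisted_circulant e n s - twisted_circulant e n t"
  by (intro eq_matI) (auto simp: twisted_circulant_def algebra_simps)

lemma twisted_rotate_diff_smult:
  "twisted_rotate e n (\<lambda>m. s m - c * t m) m = twisted_rotate e n s m - c * twisted_rotate e n t m"
  by (simp add: twisted_rotate_def algebra_simps)

lemma twisted_circulant_mult_shift:
  "twisted_circulant e n s * twisted_shift e n = twisted_circulant e n (twisted_rotate e n s)"
proof (rule eq_matI)
  fix i j assume "i < dim_row (twisted_circulant e n (twisted_rotate e n s))"
    and "j < dim_col (twisted_circulant e n (twisted_rotate e n s))"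
  then have i: "i < n" and j: "j < n" by simp_all
  let ?M = "twisted_circulant e n s"
  have "(?M * twisted_shift e n) $$ (i, j) =
      (\<Sum>l<n. ?M $$ (i, l) * (if 0 < j then (if l = j - 1 then 1 else 0) else (if l = n - 1 then e else 0)))"
    using i j by (simp add: scalar_prod_def lessThan_atLeast0 twisted_shift_index)
  also have "\<dots> = (if 0 < j then ?M $$ (i, j - 1) else e * ?M $$ (i, n - 1))"
    using j by (auto simp: if_distrib[of "\<lambda>x. _ * x"] mult.commute cong: if_cong)
  also have "\<dots> = twisted_circulant e n (twisted_rotate e n s) $$ (i, j)"
    using i j by (auto simp: twisted_circulant_def twisted_rotate_def)
  finally show "(?M * twisted_shift e n) $$ (i, j) = twisted_circulant e n (twisted_rotate e n s) $$ (i, j)" .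
qed (auto simp: twisted_circulant_def twisted_shift_def)

lemma twisted_circulant_mult_shift_minus:
  "twisted_circulant e n s * (twisted_shift e n - r \<cdot>\<^sub>m 1\<^sub>m n) =
    twisted_circulant e n (\<lambda>m. twisted_rotate e n s m - r * s m)"
proof -
  let ?M = "twisted_circulant e n s"
  have "?M * (twisted_shift e n - r \<cdot>\<^sub>m 1\<^sub>m n) = ?M * twisted_shift e n - ?M * (r \<cdot>\<^sub>m 1\<^sub>m n)"
    by (rule mult_minus_distrib_mat) auto
  also have "?M * (r \<cdot>\<^sub>m 1\<^sub>m n) = r \<cdot>\<^sub>m ?M"
    by (simp add: mult_smult_distrib[OF twisted_circulant_carrier one_carrier_mat])
  finally show ?thesis
    by (simp add: twisted_circulant_mult_shift twisted_circulant_diff twisted_circulant_smult)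
qed

lemma twisted_shift_eq_twisted_circulant:
  "twisted_shift e n = twisted_circulant e n (twisted_rotate e n (\<lambda>m. if m = 0 then 1 else 0))"
  using twisted_circulant_mult_shift[of e n "\<lambda>m. if m = 0 then 1 else 0"]
  by (simp add: twisted_circulant_delta)

lemma det_twisted_shift_minus_nonzero:
  assumes "r ^ n \<noteq> (e :: 'a :: idom)"
  shows "det (twisted_shift e n - r \<cdot>\<^sub>m 1\<^sub>m n) \<noteq> 0"
proof -
  \<comment> \<open>Q = \<Sum>_j r^(n-1-j) P^j, so Q (P - r) telescopes to P^n - r^n = e - r^n.\<close>
  define Q where "Q = twisted_circulant e n (\<lambda>m. r ^ (n - 1 - m))"
  have "Q * (twisted_shift e n - r \<cdot>\<^sub>m 1\<^sub>m n) =
      twisted_circulant e n (\<lambda>m. (e - r ^ n) * (if m = 0 then 1 else 0))"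
    unfolding Q_def twisted_circulant_mult_shift_minus
  proof (rule twisted_circulant_cong)
    fix m assume "m < n"
    then show "twisted_rotate e n (\<lambda>m. r ^ (n - 1 - m)) m - r * r ^ (n - 1 - m) =
        (e - r ^ n) * (if m = 0 then 1 else 0)"
      by (auto simp: twisted_rotate_def power_Suc[symmetric] Suc_diff_Suc simp del: power_Suc)
  qed
  then have "det (Q * (twisted_shift e n - r \<cdot>\<^sub>m 1\<^sub>m n)) = (e - r ^ n) ^ n"
    by (simp add: twisted_circulant_smult twisted_circulant_delta)
  then have "det Q * det (twisted_shift e n - r \<cdot>\<^sub>m 1\<^sub>m n) = (e - r ^ n) ^ n"
    by (subst (asm) det_mult[of _ n]) (auto simp: Q_def)
  with assms show ?thesis by auto
qed

lemma det_twisted_shift_minus_zero: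
  assumes n: "0 < n" and r: "r ^ n = (e :: 'a :: idom)"
  shows "det (twisted_shift e n - r \<cdot>\<^sub>m 1\<^sub>m n) = 0"
proof -
  define v where "v = vec n (\<lambda>i. r ^ i)"
  have v: "v \<in> carrier_vec n" "v \<noteq> 0\<^sub>v n"
    using n by (auto simp: v_def dest!: arg_cong[of _ _ "\<lambda>w. w $ 0"])
  have eigen: "twisted_shift e n *\<^sub>v v = r \<cdot>\<^sub>v v"
  proof (rule eq_vecI)
    fix i assume "i < dim_vec (r \<cdot>\<^sub>v v)"
    then have i: "i < n" by (simp add: v_def)
    have "(twisted_shift e n *\<^sub>v v) $ i =
        (\<Sum>l<n. (if l = Suc i then 1 else if i = n - 1 \<and> l = 0 then e else 0) * r ^ l)"
      using i by (simp add: twisted_shift_def v_def scalar_prod_def lessThan_atLeast0)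
    also have "\<dots> = r * r ^ i"
    proof (cases "Suc i < n")
      case True
      then have "i \<noteq> n - 1" by simp
      with True show ?thesis by (simp add: if_distrib[of "\<lambda>x. x * _"] cong: if_cong)
    next
      case False
      with i have "i = n - 1" by simp
      with n r show ?thesis by (simp add: if_distrib[of "\<lambda>x. x * _"] power_Suc[symmetric] cong: if_cong)
    qed
    finally show "(twisted_shift e n *\<^sub>v v) $ i = (r \<cdot>\<^sub>v v) $ i"
      using i by (simp add: v_def)
  qed (simp add: v_def)
  have "(twisted_shift e n - r \<cdot>\<^sub>m 1\<^sub>m n) *\<^sub>v v = 0\<^sub>v n"
  proof -
    have "(r \<cdot>\<^sub>m 1\<^sub>m n) *\<^sub>v v = r \<cdot>\<^sub>v v"
      using v(1) by (intro eq_vecI) (auto simp: scalar_prod_def lessThan_atLeast0[symmetric]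
          mult.assoc if_distrib[of "\<lambda>x. x * _"] sum_distrib_left[symmetric] cong: if_cong)
    with v(1) show ?thesis
      by (simp add: minus_mult_distrib_mat_vec[of _ n n] eigen)
  qed
  with v show ?thesis
    by (subst det_0_iff_vec_prod_zero) auto
qed

lemma det_twisted_shift_minus_eq_0_iff:
  "0 < n \<Longrightarrow> det (twisted_shift e n - r \<cdot>\<^sub>m 1\<^sub>m n) = 0 \<longleftrightarrow> r ^ n = (e :: 'a :: idom)"
  using det_twisted_shift_minus_nonzero det_twisted_shift_minus_zero by blast

lemma det_twisted_shift_combination_eq_0_iff:
  fixes c0 c1 :: "'a :: field"
  assumes n: "0 < n"
  shows "det (c0 \<cdot>\<^sub>m 1\<^sub>m n + c1 \<cdot>\<^sub>m twisted_shift e n) = 0 \<longleftrightarrow>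
    (c0 = 0 \<and> c1 = 0) \<or> (c1 \<noteq> 0 \<and> (- c0 / c1) ^ n = e)"
proof (cases "c1 = 0")
  case True
  then have "c0 \<cdot>\<^sub>m 1\<^sub>m n + c1 \<cdot>\<^sub>m twisted_shift e n = c0 \<cdot>\<^sub>m 1\<^sub>m n"
    by (intro eq_matI) auto
  with True n show ?thesis by simp
next
  case False
  then have "c0 \<cdot>\<^sub>m 1\<^sub>m n + c1 \<cdot>\<^sub>m twisted_shift e n =
      c1 \<cdot>\<^sub>m (twisted_shift e n - (- c0 / c1) \<cdot>\<^sub>m 1\<^sub>m n)"
    by (intro eq_matI) (auto simp: field_simps)
  with False n show ?thesis by (simp add: det_twisted_shift_minus_eq_0_iff)
qed

lemma twisted_rotate_FL_recurrence:
  fixes e k a b :: real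
  defines "s \<equiv> \<lambda>m. FL k a b (m + 1)" and "\<delta> \<equiv> \<lambda>m::nat. if m = 0 then 1 else (0::real)"
  assumes m: "m < n"
  shows "twisted_rotate e n (twisted_rotate e n s) m + k * twisted_rotate e n s m - s m =
    (e * FL k a b (n + 1) - FL k a b 1) * \<delta> m + (e * FL k a b n - 2 * b) * twisted_rotate e n \<delta> m"
proof -
  consider "m = 0" "n = 1" | "m = 0" "2 \<le> n" | "m = 1" | j where "m = j + 2"
  proof -
    have "m = 0 \<and> n = 1 \<or> m = 0 \<and> 2 \<le> n \<or> m = 1 \<or> 2 \<le> m" using m by linarith
    then show thesis using that by (metis le_add_diff_inverse2)
  qed
  then show ?thesis
  proof cases
    case 1
    then show ?thesis by (simp add: s_def \<delta>_def twisted_rotate_def algebra_simps)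
  next
    case 2
    then obtain j where "n = j + 2" by (metis le_add_diff_inverse2)
    with 2 show ?thesis by (simp add: s_def \<delta>_def twisted_rotate_def algebra_simps)
  next
    case 3
    with m show ?thesis by (simp add: s_def \<delta>_def twisted_rotate_def algebra_simps numeral_2_eq_2)
  next
    case 4
    have "FL k a b (j + 3) = k * FL k a b (j + 2) + FL k a b (j + 1)"
      by (simp add: numeral_3_eq_3 numeral_2_eq_2)
    with 4 show ?thesis by (simp add: s_def \<delta>_def twisted_rotate_def)
  qed
qed

lemma twisted_circulant_FL_factorization:
  fixes e k a b r1 r2 :: real
  assumes r: "r1 + r2 = - k" "r1 * r2 = - 1"
  shows "twisted_circulant e n (\<lambda>m. FL k a b (m + 1))
      * (twisted_shift e n - r1 \<cdot>\<^sub>m 1\<^sub>m n) * (twisted_shift e n - r2 \<cdot>\<^sub>m 1\<^sub>m n) =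
    (e * FL k a b (n + 1) - FL k a b 1) \<cdot>\<^sub>m 1\<^sub>m n + (e * FL k a b n - 2 * b) \<cdot>\<^sub>m twisted_shift e n"
proof -
  let ?s = "\<lambda>m. FL k a b (m + 1)" and ?\<delta> = "\<lambda>m::nat. if m = 0 then 1 else (0::real)"
  let ?t = "\<lambda>m. twisted_rotate e n ?s m - r1 * ?s m"
  have "twisted_circulant e n ?s * (twisted_shift e n - r1 \<cdot>\<^sub>m 1\<^sub>m n) * (twisted_shift e n - r2 \<cdot>\<^sub>m 1\<^sub>m n) =
      twisted_circulant e n (\<lambda>m. twisted_rotate e n ?t m - r2 * ?t m)"
    by (simp add: twisted_circulant_mult_shift_minus)
  also have "\<dots> = twisted_circulant e n (\<lambda>m. (e * FL k a b (n + 1) - FL k a b 1) * ?\<delta> m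
      + (e * FL k a b n - 2 * b) * twisted_rotate e n ?\<delta> m)"
  proof (rule twisted_circulant_cong)
    fix m assume "m < n"
    have "twisted_rotate e n ?t m - r2 * ?t m =
        twisted_rotate e n (twisted_rotate e n ?s) m - (r1 + r2) * twisted_rotate e n ?s m
          + r1 * r2 * ?s m"
      by (simp add: twisted_rotate_diff_smult algebra_simps)
    also have "\<dots> = twisted_rotate e n (twisted_rotate e n ?s) m + k * twisted_rotate e n ?s m - ?s m"
      unfolding r by simp
    also have "\<dots> = (e * FL k a b (n + 1) - FL k a b 1) * ?\<delta> m
        + (e * FL k a b n - 2 * b) * twisted_rotate e n ?\<delta> m"
      using twisted_rotate_FL_recurrence[OF \<open>m < n\<close>] by simp
    finally show "twisted_rotate e n ?t m - r2 * ?t m = \<dots>" .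
  qed
  also have "\<dots> = (e * FL k a b (n + 1) - FL k a b 1) \<cdot>\<^sub>m 1\<^sub>m n + (e * FL k a b n - 2 * b) \<cdot>\<^sub>m twisted_shift e n"
    by (simp add: twisted_circulant_add twisted_circulant_smult twisted_circulant_delta
        flip: twisted_shift_eq_twisted_circulant)
  finally show ?thesis .
qed

lemma det_twisted_circulant_FL_eq_0_iff:
  fixes e k a b :: real and n :: nat
  defines "c0 \<equiv> e * FL k a b (n + 1) - FL k a b 1" and "c1 \<equiv> e * FL k a b n - 2 * b"
  assumes e: "\<bar>e\<bar> = 1" and k: "k \<noteq> 0" and n: "0 < n"
  shows "det (twisted_circulant e n (\<lambda>m. FL k a b (m + 1))) = 0 \<longleftrightarrow>
    (c0 = 0 \<and> c1 = 0) \<or> (c1 \<noteq> 0 \<and> (- c0 / c1) ^ n = e)"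
proof -
  define r1 where "r1 = (- k + sqrt (k\<^sup>2 + 4)) / 2"
  define r2 where "r2 = - k - r1"
  have "sqrt (k\<^sup>2 + 4) ^ 2 = k\<^sup>2 + 4" by simp
  then have r: "r1 + r2 = - k" "r1 * r2 = - 1"
    by (auto simp: r1_def r2_def field_simps power2_eq_square)
  have root_nonzero: "det (twisted_shift e n - r \<cdot>\<^sub>m 1\<^sub>m n) \<noteq> 0" if "r * r + k * r = 1" for r
  proof
    assume "det (twisted_shift e n - r \<cdot>\<^sub>m 1\<^sub>m n) = 0"
    with n have "r ^ n = e" by (simp add: det_twisted_shift_minus_eq_0_iff)
    with n e have "r = 1 \<or> r = - 1" by (intro abs_power_eq_1_imp) auto
    with that k show False by auto
  qed
  have k_eq: "k = - (r1 + r2)" using r(1) by simp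
  have "r1 * r1 + k * r1 = 1" "r2 * r2 + k * r2 = 1"
    by (subst k_eq, simp add: algebra_simps r(2))+
  then have "det (twisted_shift e n - r1 \<cdot>\<^sub>m 1\<^sub>m n) \<noteq> 0" "det (twisted_shift e n - r2 \<cdot>\<^sub>m 1\<^sub>m n) \<noteq> 0"
    using root_nonzero by blast+
  moreover have "det (twisted_circulant e n (\<lambda>m. FL k a b (m + 1))) * det (twisted_shift e n - r1 \<cdot>\<^sub>m 1\<^sub>m n)
      * det (twisted_shift e n - r2 \<cdot>\<^sub>m 1\<^sub>m n) = det (c0 \<cdot>\<^sub>m 1\<^sub>m n + c1 \<cdot>\<^sub>m twisted_shift e n)"
  proof -
    have X: "twisted_shift e n - r \<cdot>\<^sub>m 1\<^sub>m n \<in> carrier_mat n n" for r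
      by (simp add: minus_carrier_mat)
    note G = twisted_circulant_carrier[of e n "\<lambda>m. FL k a b (m + 1)"]
    show ?thesis
      unfolding c0_def c1_def twisted_circulant_FL_factorization[OF r, symmetric]
      using det_mult[OF mult_carrier_mat[OF G X] X] det_mult[OF G X] by simp
  qed
  ultimately show ?thesis
    using det_twisted_shift_combination_eq_0_iff[OF n] by (metis mult_eq_0_iff)
qed

lemma skewcircA_eq_twisted_circulant:
  "skewcircA k a b n = twisted_circulant (- 1) n (\<lambda>m. FL k a b (m + 1))"
  by (intro eq_matI) (auto simp: skewcircA_def twisted_circulant_def)

lemma circB_eq_twisted_circulant:
  "circB k a b n = twisted_circulant 1 n (\<lambda>m. FL k a b (m + 1))"
  by (intro eq_matI) (auto simp: circB_def twisted_circulant_def)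

lemma invertible_skewcircA_iff:
  assumes "k \<noteq> 0" and n: "odd n"
  shows "invertible_mat (skewcircA k a b n) \<longleftrightarrow>
    FL k a b (n + 1) - FL k a b n \<noteq> - b * k + 2 * b - a"
proof -
  from n have "0 < n" by (simp add: odd_pos)
  have abs_minus_one: "\<bar>- 1 :: real\<bar> = 1" by simp
  have "invertible_mat (skewcircA k a b n) \<longleftrightarrow>
      - FL k a b (n + 1) - FL k a b 1 \<noteq> - FL k a b n - 2 * b"
    unfolding skewcircA_eq_twisted_circulant invertible_mat_iff_det_nonzero[OF twisted_circulant_carrier]
      det_twisted_circulant_FL_eq_0_iff[where e = "- 1", OF abs_minus_one assms(1) \<open>0 < n\<close>]
      singular_combination_odd_iff[OF n]
    by simp
  then show ?thesis by auto
qed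

lemma invertible_circB_iff:
  assumes "k \<noteq> 0" and n: "even n" "2 \<le> n"
  shows "invertible_mat (circB k a b n) \<longleftrightarrow>
    FL k a b (n + 1) - FL k a b n \<noteq> b * k - 2 * b + a \<and>
    FL k a b (n + 1) + FL k a b n \<noteq> b * k + 2 * b + a"
proof -
  from n have "0 < n" by simp
  have "invertible_mat (circB k a b n) \<longleftrightarrow>
      \<not> (FL k a b (n + 1) - FL k a b 1 = FL k a b n - 2 * b \<or>
         FL k a b (n + 1) - FL k a b 1 = - (FL k a b n - 2 * b))"
    unfolding circB_eq_twisted_circulant invertible_mat_iff_det_nonzero[OF twisted_circulant_carrier]
      det_twisted_circulant_FL_eq_0_iff[where e = 1, OF abs_one assms(1) \<open>0 < n\<close>]
      singular_combination_even_iff[OF n(1) \<open>0 < n\<close>]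
    by simp
  then show ?thesis by auto
qed

theorem theorem2p5:
  fixes k a b :: real
  assumes "k \<noteq> 0"
  shows "(\<forall>n::nat. odd n \<longrightarrow>
            (invertible_mat (skewcircA k a b n) \<longleftrightarrow>
             FL k a b (n + 1) - FL k a b n \<noteq> - b * k + 2 * b - a))
       \<and> (\<forall>n::nat. even n \<and> n \<ge> 2 \<longrightarrow>
            (invertible_mat (circB k a b n) \<longleftrightarrow>
             FL k a b (n + 1) - FL k a b n \<noteq> b * k - 2 * b + a \<and>
             FL k a b (n + 1) + FL k a b n \<noteq> b * k + 2 * b + a))"
  using invertible_skewcircA_iff[OF assms] invertible_circB_iff[OF assms] by blast

end
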